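(* Let $f(x)=\frac{2x}{\tanh x}-\log\left(\frac{\cosh^2 x+1}{2}\right)$ for $x>0$. There is a point $x_1=1.606\ldots$ such that for all $x>0$, $$2<f(x)\le f(x_1)=2.1312\ldots .$$ *)

theory Defs
  imports Complex_Main
begin

definition f_lemma2 :: "real \<Rightarrow> real" where
  "f_lemma2 x = 2 * x / tanh x - ln ((cosh x ^ 2 + 1) / 2)"

end

theory Submission
  imports Defs "HOL-Real_Asymp.Real_Asymp"
begin

(* With deriv_num y = 4 sinh y - y cosh y - 3 y one has
   f'(x) = deriv_num (2x) / (2 sinh^2 x (cosh^2 x + 1)). The quotient deriv_num y / y^3 is strictly
   decreasing for y > 0, so deriv_num changes sign only once there: f increases up to the zero x1
   of deriv_num (2x) and decreases afterwards. As f tends to 2 at 0 and to ln 8 > 2 at infinity,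
   2 < f x <= f x1 for all x > 0. Finally deriv_num 3.212 > 0 > deriv_num 3.213 locates x1 in
   (1.606, 1.6065), where truncated exponential series pin down the value of f. *)

lemma neg_if_zero_and_deriv_neg:
  fixes F F' :: "real \<Rightarrow> real"
  assumes "F 0 = 0" and "\<And>t. (F has_real_derivative F' t) (at t)"
    and "\<And>t. 0 < t \<Longrightarrow> F' t < 0" and "0 < y"
  shows "F y < 0"
proof -
  obtain t where "0 < t" "t < y" "F y - F 0 = (y - 0) * F' t"
    using MVT2[of 0 y F F'] assms by auto
  with assms show ?thesis
    by (simp add: mult_pos_neg)
qed

lemma tendsto_at_right_less_if_strict_mono_on:
  fixes f :: "real \<Rightarrow> real"
  assumes lim: "(f \<longlongrightarrow> L) (at_right a)" and mono: "strict_mono_on {a<..b} f"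
    and x: "a < x" "x \<le> b"
  shows "L < f x"
proof -
  define m where "m = (a + x) / 2"
  have m: "a < m" "m < x"
    using x unfolding m_def by auto
  have "eventually (\<lambda>u. f u \<le> f m) (at_right a)"
    unfolding eventually_at_right_field
    using m x by (auto intro!: exI[of _ m] less_imp_le monotone_onD[OF mono])
  then have "L \<le> f m"
    by (rule tendsto_upperbound[OF lim]) simp
  also have "f m < f x"
    using m x by (intro monotone_onD[OF mono]) auto
  finally show ?thesis .
qed

lemma tendsto_at_top_less_if_strict_antimono_on:
  fixes f :: "real \<Rightarrow> real"
  assumes lim: "(f \<longlongrightarrow> L) at_top" and mono: "strict_antimono_on {b..} f"
    and x: "b \<le> x"
  shows "L < f x"
proof -
  have "eventually (\<lambda>u. f u \<le> f (x + 1)) at_top"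
    unfolding eventually_at_top_linorder
    using x by (auto intro!: exI[of _ "x + 2"] less_imp_le monotone_onD[OF mono])
  then have "L \<le> f (x + 1)"
    by (rule tendsto_upperbound[OF lim]) simp
  also have "f (x + 1) < f x"
    using x by (intro monotone_onD[OF mono]) auto
  finally show ?thesis .
qed

lemma exp_ge_if_Taylor_ge:
  fixes x :: real
  assumes "0 \<le> x" and "L \<le> (\<Sum>m<n. x ^ m / fact m)"
  shows "L \<le> exp x"
proof -
  obtain t where "exp x = (\<Sum>m<n. x ^ m / fact m) + exp t / fact n * x ^ n"
    using Maclaurin_exp_le by blast
  moreover have "0 \<le> exp t / fact n * x ^ n"
    using assms by simp
  ultimately show ?thesis
    using assms by linarith
qed

lemma exp_le_if_Taylor_le:
  fixes x :: real
  assumes "0 \<le> x" and "x ^ n / fact n < 1"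
    and "(\<Sum>m<n. x ^ m / fact m) / (1 - x ^ n / fact n) \<le> U"
  shows "exp x \<le> U"
proof -
  obtain t where t: "\<bar>t\<bar> \<le> \<bar>x\<bar>"
    and taylor: "exp x = (\<Sum>m<n. x ^ m / fact m) + exp t / fact n * x ^ n"
    using Maclaurin_exp_le by blast
  have "exp t / fact n * x ^ n \<le> exp x * (x ^ n / fact n)"
    using t assms by (simp add: divide_right_mono mult_right_mono)
  with taylor have "exp x \<le> (\<Sum>m<n. x ^ m / fact m) + exp x * (x ^ n / fact n)"
    by linarith
  then have "exp x * (1 - x ^ n / fact n) \<le> (\<Sum>m<n. x ^ m / fact m)"
    by (simp add: algebra_simps)
  then have "exp x \<le> (\<Sum>m<n. x ^ m / fact m) / (1 - x ^ n / fact n)"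
    using assms(2) by (simp add: pos_le_divide_eq)
  with assms(3) show ?thesis
    by linarith
qed

lemma mult_minus_divide_mono:
  fixes p q X Y :: real
  assumes "0 \<le> p" and "0 \<le> q" and "0 < X" and "X \<le> Y"
  shows "p * X - q / X \<le> p * Y - q / Y"
proof -
  have "p * X \<le> p * Y"
    using assms by (simp add: mult_left_mono)
  moreover have "q / Y \<le> q / X"
    using assms by (intro divide_left_mono) auto
  ultimately show ?thesis
    by linarith
qed

section \<open>The sign of the derivative\<close>

definition deriv_num :: "real \<Rightarrow> real" where
  "deriv_num y = 4 * sinh y - y * cosh y - 3 * y"

(* This is the numerator of the derivative of deriv_num y / y^3. It vanishes at 0 together with
   its first two derivatives, and its third derivative is -y^2 cosh y. *)
lemma deriv_num_div_cube_numerator_neg: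
  fixes y :: real
  assumes "0 < y"
  shows "6 * y * cosh y + 6 * y - y\<^sup>2 * sinh y - 12 * sinh y < 0"
proof -
  have third: "2 * t * cosh t - 2 * sinh t - t\<^sup>2 * sinh t < 0" if "0 < t" for t :: real
    by (rule neg_if_zero_and_deriv_neg[where F = "\<lambda>t. 2 * t * cosh t - 2 * sinh t - t\<^sup>2 * sinh t"
          and F' = "\<lambda>t. - (t\<^sup>2 * cosh t)"])
      (auto intro!: derivative_eq_intros simp: that algebra_simps power2_eq_square)
  have second: "4 * t * sinh t + 6 - 6 * cosh t - t\<^sup>2 * cosh t < 0" if "0 < t" for t :: real
    by (rule neg_if_zero_and_deriv_neg[where F = "\<lambda>t. 4 * t * sinh t + 6 - 6 * cosh t - t\<^sup>2 * cosh t"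
          and F' = "\<lambda>t. 2 * t * cosh t - 2 * sinh t - t\<^sup>2 * sinh t"])
      (auto intro!: derivative_eq_intros simp: algebra_simps power2_eq_square that dest: third)
  show ?thesis
    by (rule neg_if_zero_and_deriv_neg[where F = "\<lambda>t. 6 * t * cosh t + 6 * t - t\<^sup>2 * sinh t - 12 * sinh t"
          and F' = "\<lambda>t. 4 * t * sinh t + 6 - 6 * cosh t - t\<^sup>2 * cosh t"])
      (auto intro!: derivative_eq_intros simp: assms algebra_simps power2_eq_square dest: second)
qed

lemma deriv_num_div_cube_strict_decreasing:
  assumes "0 < y" and "y < z"
  shows "deriv_num z / z ^ 3 < deriv_num y / y ^ 3"
proof (rule DERIV_neg_imp_decreasing[where f = "\<lambda>y. deriv_num y / y ^ 3", OF \<open>y < z\<close>])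
  fix t assume "y \<le> t" "t \<le> z"
  with assms have "0 < t" by linarith
  let ?d = "(6 * t * cosh t + 6 * t - t\<^sup>2 * sinh t - 12 * sinh t) / t ^ 4"
  have "((\<lambda>y. deriv_num y / y ^ 3) has_real_derivative ?d) (at t)"
    unfolding deriv_num_def using \<open>0 < t\<close>
    by (auto intro!: derivative_eq_intros simp: field_simps power2_eq_square eval_nat_numeral)
  moreover have "?d < 0"
    using deriv_num_div_cube_numerator_neg[OF \<open>0 < t\<close>] \<open>0 < t\<close> by (simp add: divide_neg_pos)
  ultimately show "\<exists>d. ((\<lambda>y. deriv_num y / y ^ 3) has_real_derivative d) (at t) \<and> d < 0"
    by blast
qed

lemma deriv_num_pos_if_nonneg_right:
  assumes "0 < y" and "y < z" and "0 \<le> deriv_num z"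
  shows "0 < deriv_num y"
proof -
  have "0 \<le> deriv_num z / z ^ 3"
    using assms by simp
  also have "\<dots> < deriv_num y / y ^ 3"
    using assms(1,2) by (rule deriv_num_div_cube_strict_decreasing)
  finally show ?thesis
    using \<open>0 < y\<close> by (simp add: zero_less_divide_iff)
qed

lemma deriv_num_neg_if_nonpos_left:
  assumes "0 < y" and "y < z" and "deriv_num y \<le> 0"
  shows "deriv_num z < 0"
proof -
  have "deriv_num z / z ^ 3 < deriv_num y / y ^ 3"
    using assms by (intro deriv_num_div_cube_strict_decreasing)
  also have "\<dots> \<le> 0"
    using assms by (simp add: divide_nonpos_pos)
  finally show ?thesis
    using assms by (simp add: divide_less_0_iff)
qed

lemma deriv_num_double:
  "deriv_num (2 * x) = 4 * (2 * sinh x * cosh x - x * (cosh x ^ 2 + 1))"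
  unfolding deriv_num_def sinh_double cosh_double
  using cosh_square_eq[of x] by (simp add: algebra_simps)

lemma f_lemma2_has_real_derivative:
  assumes "0 < x"
  shows "(f_lemma2 has_real_derivative deriv_num (2 * x) / (2 * sinh x ^ 2 * (cosh x ^ 2 + 1))) (at x)"
proof -
  have s: "sinh x \<noteq> 0"
    using assms by simp
  have c: "0 < cosh x ^ 2 + 1"
    using zero_le_power2[of "cosh x"] by linarith
  have pyth: "cosh x ^ 2 - sinh x ^ 2 = 1"
    by (simp add: cosh_square_eq)
  have "(f_lemma2 has_real_derivative
          2 * cosh x / sinh x - 2 * x / sinh x ^ 2 - 2 * sinh x * cosh x / (cosh x ^ 2 + 1)) (at x)"
    unfolding f_lemma2_def [abs_def] tanh_def using s c pyth
    by (auto intro!: derivative_eq_intros simp: field_simps power2_eq_square) algebra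
  also have "2 * cosh x / sinh x - 2 * x / sinh x ^ 2 - 2 * sinh x * cosh x / (cosh x ^ 2 + 1)
      = deriv_num (2 * x) / (2 * sinh x ^ 2 * (cosh x ^ 2 + 1))"
    unfolding deriv_num_double using s c pyth
    by (simp add: divide_simps) algebra
  finally show ?thesis .
qed

section \<open>Monotonicity and limits\<close>

lemma f_lemma2_continuous_on: "continuous_on {0<..} f_lemma2"
  using f_lemma2_has_real_derivative
  by (auto intro!: continuous_at_imp_continuous_on DERIV_isCont)

lemma f_lemma2_strict_mono_on:
  assumes "0 < c" and "deriv_num (2 * c) = 0"
  shows "strict_mono_on {0<..c} f_lemma2"
proof (rule monotone_onI)
  fix u v assume uv: "u \<in> {0<..c}" "v \<in> {0<..c}" "u < v"
  show "f_lemma2 u < f_lemma2 v"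
  proof (rule DERIV_pos_imp_increasing_open[OF \<open>u < v\<close>])
    fix z assume "u < z" "z < v"
    with uv assms have "0 < deriv_num (2 * z)"
      by (intro deriv_num_pos_if_nonneg_right[of _ "2 * c"]) auto
    moreover have "0 < z"
      using uv \<open>u < z\<close> by simp
    ultimately show "\<exists>d. (f_lemma2 has_real_derivative d) (at z) \<and> 0 < d"
      by (intro exI[of _ "deriv_num (2 * z) / (2 * sinh z ^ 2 * (cosh z ^ 2 + 1))"]
          conjI f_lemma2_has_real_derivative) (auto simp: add_nonneg_pos)
  next
    show "continuous_on {u..v} f_lemma2"
      using uv by (auto intro: continuous_on_subset[OF f_lemma2_continuous_on])
  qed
qed

lemma f_lemma2_strict_antimono_on:
  assumes "0 < c" and "deriv_num (2 * c) = 0"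
  shows "strict_antimono_on {c..} f_lemma2"
proof (rule monotone_onI)
  fix u v assume uv: "u \<in> {c..}" "v \<in> {c..}" "u < v"
  show "f_lemma2 v < f_lemma2 u"
  proof (rule DERIV_neg_imp_decreasing_open[OF \<open>u < v\<close>])
    fix z assume "u < z" "z < v"
    with uv assms have "deriv_num (2 * z) < 0"
      by (intro deriv_num_neg_if_nonpos_left[of "2 * c"]) auto
    moreover have "0 < z"
      using uv assms \<open>u < z\<close> by simp
    ultimately show "\<exists>d. (f_lemma2 has_real_derivative d) (at z) \<and> d < 0"
      by (intro exI[of _ "deriv_num (2 * z) / (2 * sinh z ^ 2 * (cosh z ^ 2 + 1))"]
          conjI f_lemma2_has_real_derivative) (auto simp: add_nonneg_pos divide_neg_pos)
  next
    show "continuous_on {u..v} f_lemma2"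
      using uv assms by (auto intro: continuous_on_subset[OF f_lemma2_continuous_on])
  qed
qed

lemma f_lemma2_le_critical_value:
  assumes "0 < c" and "deriv_num (2 * c) = 0" and "0 < x"
  shows "f_lemma2 x \<le> f_lemma2 c"
proof (cases "x \<le> c")
  case True
  then show ?thesis
    using monotone_onD[OF f_lemma2_strict_mono_on[OF assms(1,2)], of x c] assms
    by (cases "x = c") auto
next
  case False
  then show ?thesis
    using monotone_onD[OF f_lemma2_strict_antimono_on[OF assms(1,2)], of c x] by simp
qed

lemma f_lemma2_tendsto_at_right_0: "(f_lemma2 \<longlongrightarrow> 2) (at_right 0)"
  unfolding f_lemma2_def [abs_def] tanh_def sinh_field_def cosh_field_def by real_asymp

lemma f_lemma2_tendsto_at_top: "(f_lemma2 \<longlongrightarrow> ln 8) at_top"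
proof -
  have "(f_lemma2 \<longlongrightarrow> - ln ((1 / 2) ^ 2 / 2)) at_top"
    unfolding f_lemma2_def [abs_def] tanh_def sinh_field_def cosh_field_def by real_asymp
  moreover have "- ln ((1 / 2) ^ 2 / 2) = (ln 8 :: real)"
    by (simp add: ln_div power2_eq_square)
  ultimately show ?thesis
    by simp
qed

section \<open>Numerical bounds\<close>

lemma exp_3_212_bounds: "24.82869 \<le> exp (3.212 :: real)" "exp (3.212 :: real) \<le> 24.8287"
  by (rule exp_ge_if_Taylor_ge[where n = 18] exp_le_if_Taylor_le[where n = 18];
      simp add: eval_nat_numeral)+

lemma exp_3_213_le: "exp (3.213 :: real) \<le> 24.8536"
  by (rule exp_le_if_Taylor_le[where n = 18]) (simp_all add: eval_nat_numeral)

lemma exp_1_35035_ge: "3.8587 \<le> exp (1.35035 :: real)"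
  by (rule exp_ge_if_Taylor_ge[where n = 14]) (simp_all add: eval_nat_numeral)

lemma exp_1_350305_le: "exp (1.350305 :: real) \<le> 3.85861"
  by (rule exp_le_if_Taylor_le[where n = 14]) (simp_all add: eval_nat_numeral)

lemma exp_2_less_8: "exp (2 :: real) < 8"
proof -
  have "exp (2 :: real) \<le> 7.4"
    by (rule exp_le_if_Taylor_le[where n = 12]) (simp_all add: eval_nat_numeral)
  then show ?thesis
    by simp
qed

lemma two_less_ln_8: "2 < ln (8 :: real)"
proof -
  have "ln (exp 2) < ln (8 :: real)"
    by (subst ln_less_cancel_iff) (use exp_2_less_8 in auto)
  then show ?thesis
    by (simp only: ln_exp)
qed

lemma deriv_num_exp: "deriv_num y = (2 - y / 2) * exp y - (2 + y / 2) / exp y - 3 * y"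
  unfolding deriv_num_def sinh_field_def cosh_field_def exp_minus
  by (simp add: field_simps)

lemma deriv_num_3_212_pos: "0 < deriv_num 3.212"
proof -
  have "0 < 0.394 * 24.82869 - 3.606 / 24.82869 - (9.636 :: real)"
    by simp
  also have "\<dots> \<le> 0.394 * exp 3.212 - 3.606 / exp 3.212 - 9.636"
    using mult_minus_divide_mono[of "0.394" "3.606" "24.82869" "exp 3.212"] exp_3_212_bounds(1)
    by simp
  also have "\<dots> = deriv_num 3.212"
    by (simp add: deriv_num_exp)
  finally show ?thesis .
qed

lemma deriv_num_3_213_neg: "deriv_num 3.213 < 0"
proof -
  have "deriv_num 3.213 = 0.3935 * exp 3.213 - 3.6065 / exp 3.213 - (9.639 :: real)"
    by (simp add: deriv_num_exp)
  also have "\<dots> \<le> 0.3935 * 24.8536 - 3.6065 / 24.8536 - 9.639"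
    using mult_minus_divide_mono[of "0.3935" "3.6065" "exp 3.213" "24.8536"] exp_3_213_le
    by simp
  also have "\<dots> < 0"
    by simp
  finally show ?thesis .
qed

lemma deriv_num_zero_exists: "\<exists>c. 1.606 < c \<and> c < 1.6065 \<and> deriv_num (2 * c) = 0"
proof -
  have "continuous_on {1.606..1.6065} (\<lambda>x. deriv_num (2 * x))"
    unfolding deriv_num_def by (intro continuous_intros)
  then obtain c where c: "1.606 \<le> c" "c \<le> 1.6065" "deriv_num (2 * c) = 0"
    using IVT2'[of "\<lambda>x. deriv_num (2 * x)" "1.6065" 0 "1.606"] deriv_num_3_212_pos deriv_num_3_213_neg
    by auto
  moreover have "c \<noteq> 1.606" "c \<noteq> 1.6065"
    using c(3) deriv_num_3_212_pos deriv_num_3_213_neg by force+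
  ultimately show ?thesis
    by (intro exI[of _ c]) auto
qed

lemma sinh_ge_1_44:
  fixes x :: real
  assumes "1.606 \<le> x"
  shows "1.44 \<le> sinh x"
proof -
  have "1 + x + x\<^sup>2 / 2 \<le> exp x"
    using assms by (intro exp_ge_if_Taylor_ge[where n = 3]) (auto simp: eval_nat_numeral)
  moreover have "2.579236 \<le> x\<^sup>2"
    using power_mono[OF assms, of 2] by (simp add: power2_eq_square)
  moreover have "exp x - 1 \<le> 2 * sinh x"
    using assms by (simp add: sinh_field_def)
  ultimately show ?thesis
    using assms by simp
qed

lemma f_lemma2_deriv_le:
  assumes "1.606 \<le> x" and "x \<le> 1.6065"
  shows "deriv_num (2 * x) / (2 * sinh x ^ 2 * (cosh x ^ 2 + 1)) \<le> 1 / 100"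
proof -
  have "exp (2 * x) \<le> exp 3.213"
    using assms by simp
  also have "\<dots> \<le> 24.8536"
    by (rule exp_3_213_le)
  finally have "(2 - x) * exp (2 * x) \<le> 0.394 * 24.8536"
    using assms by (intro mult_mono) auto
  moreover have "deriv_num (2 * x) \<le> (2 - x) * exp (2 * x) - 6 * x"
    using assms by (simp add: deriv_num_exp)
  ultimately have num: "deriv_num (2 * x) \<le> 0.16"
    using assms by simp
  have "2.0736 \<le> sinh x ^ 2"
    using power_mono[OF sinh_ge_1_44[OF assms(1)], of 2] by (simp add: power2_eq_square)
  then have "2 * 2.0736 * (2.0736 + 2) \<le> 2 * sinh x ^ 2 * (sinh x ^ 2 + 2)"
    by (intro mult_mono) auto
  then have den: "16 \<le> 2 * sinh x ^ 2 * (cosh x ^ 2 + 1)"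
    by (simp add: cosh_square_eq add.assoc)
  show ?thesis
    using num den by (simp add: divide_simps)
qed

lemma f_lemma2_exp_form:
  assumes "x \<noteq> 0"
  shows "f_lemma2 x = 2 * x * (1 + 2 / (exp (2 * x) - 1)) - ln ((exp (2 * x) + 6 + 1 / exp (2 * x)) / 8)"
proof -
  define E where "E = exp (2 * x)"
  have "0 < E" "E \<noteq> 1"
    using assms unfolding E_def by auto
  have exp_minus_double: "exp (- 2 * x) = 1 / E"
    unfolding E_def by (simp add: exp_minus inverse_eq_divide)
  have "tanh x = (E - 1) / (E + 1)"
    unfolding tanh_real_altdef exp_minus_double using \<open>0 < E\<close> by (simp add: divide_simps)
  then have coth: "2 * x / tanh x = 2 * x * (1 + 2 / (E - 1))"
    using \<open>0 < E\<close> \<open>E \<noteq> 1\<close> by (simp add: divide_simps) (simp add: algebra_simps)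
  have "cosh x ^ 2 = (cosh (2 * x) + 1) / 2"
    by (simp add: cosh_double_cosh)
  also have "cosh (2 * x) = (E + 1 / E) / 2"
    unfolding E_def cosh_field_def by (simp add: exp_minus inverse_eq_divide)
  finally have q: "(cosh x ^ 2 + 1) / 2 = (E + 6 + 1 / E) / 8"
    using \<open>0 < E\<close> by (simp add: field_simps)
  show ?thesis
    unfolding f_lemma2_def coth q E_def ..
qed

lemma f_lemma2_1_606_bounds: "2.1312 \<le> f_lemma2 1.606" "f_lemma2 1.606 \<le> 2.13129"
proof -
  define X where "X = exp (3.212 :: real)"
  have X: "24.82869 \<le> X" "X \<le> 24.8287"
    using exp_3_212_bounds unfolding X_def by auto
  define Q where "Q = (X + 6 + 1 / X) / 8"
  define C where "C = 2 / (X - 1)"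
  have f: "f_lemma2 1.606 = 3.212 * (1 + C) - ln Q"
    unfolding X_def Q_def C_def by (simp add: f_lemma2_exp_form)
  have coth: "2 / (24.8287 - 1) \<le> C" "C \<le> 2 / (24.82869 - 1)"
    using X unfolding C_def by (intro divide_left_mono; simp)+
  have inv: "1 / 24.8287 \<le> 1 / X" "1 / X \<le> 1 / 24.82869"
    using X by (intro divide_left_mono; simp)+
  have "0 < Q"
    using X unfolding Q_def by (simp add: add_pos_pos)
  have "exp 1.350305 \<le> Q"
    using exp_1_350305_le X inv unfolding Q_def by simp
  then have ln_lower: "1.350305 \<le> ln Q"
    using ln_ge_iff[OF \<open>0 < Q\<close>] by blast
  have "Q \<le> exp 1.35035"
    using exp_1_35035_ge X inv unfolding Q_def by simp
  then have "ln Q \<le> ln (exp 1.35035)"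
    using \<open>0 < Q\<close> by (subst ln_le_cancel_iff) auto
  then have ln_upper: "ln Q \<le> 1.35035"
    by (simp only: ln_exp)
  show "2.1312 \<le> f_lemma2 1.606" "f_lemma2 1.606 \<le> 2.13129"
    using f coth ln_lower ln_upper by (simp_all add: field_simps)
qed

lemma f_lemma2_le_near_1_606:
  assumes "1.606 \<le> c" and "c \<le> 1.6065"
  shows "f_lemma2 c \<le> f_lemma2 1.606 + 0.000005"
proof -
  have "f_lemma2 c - c / 100 \<le> f_lemma2 1.606 - 1.606 / 100"
  proof (rule DERIV_nonpos_imp_nonincreasing[where f = "\<lambda>x. f_lemma2 x - x / 100", OF assms(1)])
    fix x assume x: "1.606 \<le> x" "x \<le> c"
    let ?d = "deriv_num (2 * x) / (2 * sinh x ^ 2 * (cosh x ^ 2 + 1))"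
    have "((\<lambda>x. f_lemma2 x - x / 100) has_real_derivative ?d - 1 / 100) (at x)"
      using x by (auto intro!: derivative_eq_intros f_lemma2_has_real_derivative)
    moreover have "?d - 1 / 100 \<le> 0"
      using f_lemma2_deriv_le[of x] x assms by simp
    ultimately show "\<exists>d. ((\<lambda>x. f_lemma2 x - x / 100) has_real_derivative d) (at x) \<and> d \<le> 0"
      by blast
  qed
  with assms show ?thesis
    by simp
qed

lemma f_lemma2_gt_2:
  assumes "0 < x"
  shows "2 < f_lemma2 x"
proof -
  obtain c where "0 < c" and crit: "deriv_num (2 * c) = 0"
    using deriv_num_zero_exists by force
  show ?thesis
  proof (cases "x \<le> c")
    case True
    with \<open>0 < c\<close> crit assms show ?thesis
      by (intro tendsto_at_right_less_if_strict_mono_on[OF f_lemma2_tendsto_at_right_0]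
          f_lemma2_strict_mono_on)
  next
    case False
    have "2 < ln (8 :: real)"
      by (rule two_less_ln_8)
    also have "\<dots> < f_lemma2 x"
      using False \<open>0 < c\<close> crit
      by (intro tendsto_at_top_less_if_strict_antimono_on[OF f_lemma2_tendsto_at_top]
          f_lemma2_strict_antimono_on) auto
    finally show ?thesis .
  qed
qed

theorem lemma2:
  shows "\<exists>x1::real. 1.606 \<le> x1 \<and> x1 < 1.607 \<and>
           2.1312 \<le> f_lemma2 x1 \<and> f_lemma2 x1 < 2.1313 \<and>
           (\<forall>x::real. x > 0 \<longrightarrow> 2 < f_lemma2 x \<and> f_lemma2 x \<le> f_lemma2 x1)"
proof -
  obtain c where c: "1.606 < c" "c < 1.6065" and crit: "deriv_num (2 * c) = 0"
    using deriv_num_zero_exists by blast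
  then have "0 < c"
    by simp
  have "f_lemma2 1.606 < f_lemma2 c"
    using \<open>0 < c\<close> crit c by (intro monotone_onD[OF f_lemma2_strict_mono_on]) auto
  moreover have "f_lemma2 c \<le> f_lemma2 1.606 + 0.000005"
    using c by (intro f_lemma2_le_near_1_606) auto
  moreover have "\<forall>x>0. 2 < f_lemma2 x \<and> f_lemma2 x \<le> f_lemma2 c"
    using \<open>0 < c\<close> crit by (blast intro: f_lemma2_gt_2 f_lemma2_le_critical_value)
  ultimately show ?thesis
    using c f_lemma2_1_606_bounds by (intro exI[of _ c]) auto
qed

end
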